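(* Let $\theta\in\mathrm{Irr}(N)$, let $N\le K\le\mathrm{Stab}_G(\theta)$, and let $\hat\theta$ be a strong extension of $\theta$ to $K$. Then for every $x\in K$ there exists $n\in N$ such that $\hat\theta(xn)\neq0$. Consequently, if $N\le L\le\mathrm{Stab}_G(\tilde\theta)$ normalises $K$, $g\in L$, $\psi_g\in\mathrm{Lin}(G)$ satisfies ${}^g\theta=\theta\,\psi_g|_N$, and $\mu:K\to\mathbb{C}^\times$ is a function constant on cosets of $N$ with ${}^g\hat\theta=\hat\theta\cdot\psi_g|_K\cdot\mu$, then $\mu$ is uniquely determined by $gN$, $\hat\theta$ and $\psi_g|_K$.
   Context: $G$ is a profinite group, $N$ an open normal subgroup; $\mathrm{Irr}$ and $\mathrm{Lin}$ denote continuous irreducible, resp. degree-one, complex characters. $\tilde\theta$ denotes the $G$-twist class $\{\theta\psi|_N:\psi\in\mathrm{Lin}(G)\}$ of $\theta\in\mathrm{Irr}(N)$, and $G$ acts on these classes via conjugation ${}^g\theta(n)=\theta(g^{-1}ng)$. A projective representation of $K$ is a map $\Pi:K\to\mathrm{GL}_m(\mathbb{C})$ with $\Pi(x)\Pi(y)=\alpha(x,y)\Pi(xy)$ for a 2-cocycle $\alpha:K\times K\to\mathbb{C}^\times$ (its factor set); its projective character is $x\mapsto\mathrm{Tr}\,\Pi(x)$. If $\Theta$ is a representation of $N$ affording $\theta$ and $K$ fixes $\theta$, a strong extension of $\Theta$ to $K$ is a projective representation $\Pi$ of $K$ with $\Pi(xn)=\Pi(x)\Theta(n)$ and $\Pi(nx)=\Theta(n)\Pi(x)$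 for all $x\in K$, $n\in N$; a strong extension of $\theta$ to $K$ is the projective character of such a $\Pi$. For a function $f$ on $K$, ${}^gf(x)=f(g^{-1}xg)$; products of functions are pointwise. *)

theory Defs
  imports "HOL-Analysis.Analysis" "HOL-Algebra.Coset" "Jordan_Normal_Form.Matrix"
begin

definition profinite_group :: "('a, 'b) monoid_scheme \<Rightarrow> 'a topology \<Rightarrow> bool" where
  "profinite_group G T \<longleftrightarrow>
     group G \<and> topspace T = carrier G \<and>
     continuous_map (prod_topology T T) T (\<lambda>(x, y). x \<otimes>\<^bsub>G\<^esub> y) \<and>
     continuous_map T T (\<lambda>x. inv\<^bsub>G\<^esub> x) \<and>
     compact_space T \<and> Hausdorff_space T \<and>
     (\<forall>x \<in> topspace T. connected_component_of_set T x = {x})"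

definition mat_trace :: "complex mat \<Rightarrow> complex" where
  "mat_trace A = (\<Sum>i<dim_row A. A $$ (i, i))"

text \<open>A continuous representation of degree m of the subgroup H (with the subspace
  topology) into GL_m(C); GL_m(C) carries the topology of entrywise convergence.\<close>

definition cont_rep ::
  "('a, 'b) monoid_scheme \<Rightarrow> 'a topology \<Rightarrow> 'a set \<Rightarrow> nat \<Rightarrow> ('a \<Rightarrow> complex mat) \<Rightarrow> bool" where
  "cont_rep G T H m \<Theta> \<longleftrightarrow>
     (\<forall>h \<in> H. \<Theta> h \<in> carrier_mat m m \<and> invertible_mat (\<Theta> h)) \<and>
     (\<forall>h1 \<in> H. \<forall>h2 \<in> H. \<Theta> (h1 \<otimes>\<^bsub>G\<^esub> h2) = \<Theta> h1 * \<Theta> h2) \<and>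
     (\<forall>i < m. \<forall>j < m. continuous_map (subtopology T H) euclidean (\<lambda>h. \<Theta> h $$ (i, j)))"

definition invariant_subspace :: "'a set \<Rightarrow> nat \<Rightarrow> ('a \<Rightarrow> complex mat) \<Rightarrow> complex vec set \<Rightarrow> bool" where
  "invariant_subspace H m \<Theta> W \<longleftrightarrow>
     W \<subseteq> carrier_vec m \<and> 0\<^sub>v m \<in> W \<and>
     (\<forall>v \<in> W. \<forall>w \<in> W. v + w \<in> W) \<and>
     (\<forall>c. \<forall>v \<in> W. c \<cdot>\<^sub>v v \<in> W) \<and>
     (\<forall>h \<in> H. \<forall>v \<in> W. \<Theta> h *\<^sub>v v \<in> W)"

definition irreducible_rep :: "'a set \<Rightarrow> nat \<Rightarrow> ('a \<Rightarrow> complex mat) \<Rightarrow> bool" where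
  "irreducible_rep H m \<Theta> \<longleftrightarrow>
     0 < m \<and> (\<forall>W. invariant_subspace H m \<Theta> W \<longrightarrow> W = {0\<^sub>v m} \<or> W = carrier_vec m)"

definition affords :: "'a set \<Rightarrow> ('a \<Rightarrow> complex mat) \<Rightarrow> ('a \<Rightarrow> complex) \<Rightarrow> bool" where
  "affords H \<Theta> chi \<longleftrightarrow> (\<forall>h \<in> H. chi h = mat_trace (\<Theta> h))"

definition Irr :: "('a, 'b) monoid_scheme \<Rightarrow> 'a topology \<Rightarrow> 'a set \<Rightarrow> ('a \<Rightarrow> complex) \<Rightarrow> bool" where
  "Irr G T H chi \<longleftrightarrow> (\<exists>m \<Theta>. cont_rep G T H m \<Theta> \<and> irreducible_rep H m \<Theta> \<and> affords H \<Theta> chi)"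

definition Lin :: "('a, 'b) monoid_scheme \<Rightarrow> 'a topology \<Rightarrow> ('a \<Rightarrow> complex) \<Rightarrow> bool" where
  "Lin G T \<psi> \<longleftrightarrow> (\<exists>\<Psi>. cont_rep G T (carrier G) 1 \<Psi> \<and> affords (carrier G) \<Psi> \<psi>)"

definition conjf :: "('a, 'b) monoid_scheme \<Rightarrow> 'a \<Rightarrow> ('a \<Rightarrow> 'c) \<Rightarrow> 'a \<Rightarrow> 'c" where
  "conjf G g f x = f (inv\<^bsub>G\<^esub> g \<otimes>\<^bsub>G\<^esub> x \<otimes>\<^bsub>G\<^esub> g)"

definition Stab :: "('a, 'b) monoid_scheme \<Rightarrow> 'a set \<Rightarrow> ('a \<Rightarrow> complex) \<Rightarrow> 'a set" where
  "Stab G N \<theta> = {g \<in> carrier G. \<forall>n \<in> N. conjf G g \<theta> n = \<theta> n}"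

text \<open>Stab_G of the twist class of theta: g with ^g theta = theta psi|_N, psi in Lin(G).\<close>

definition Stab_twist :: "('a, 'b) monoid_scheme \<Rightarrow> 'a topology \<Rightarrow> 'a set \<Rightarrow> ('a \<Rightarrow> complex) \<Rightarrow> 'a set" where
  "Stab_twist G T N \<theta> =
     {g \<in> carrier G. \<exists>\<psi>. Lin G T \<psi> \<and> (\<forall>n \<in> N. conjf G g \<theta> n = \<theta> n * \<psi> n)}"

definition proj_rep ::
  "('a, 'b) monoid_scheme \<Rightarrow> 'a set \<Rightarrow> nat \<Rightarrow> ('a \<Rightarrow> complex mat) \<Rightarrow> ('a \<Rightarrow> 'a \<Rightarrow> complex) \<Rightarrow> bool" where
  "proj_rep G K m Prj \<alpha> \<longleftrightarrow>
     (\<forall>x \<in> K. Prj x \<in> carrier_mat m m \<and> invertible_mat (Prj x)) \<and>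
     (\<forall>x \<in> K. \<forall>y \<in> K. \<alpha> x y \<noteq> 0) \<and>
     (\<forall>x \<in> K. \<forall>y \<in> K. \<forall>z \<in> K.
        \<alpha> x y * \<alpha> (x \<otimes>\<^bsub>G\<^esub> y) z = \<alpha> y z * \<alpha> x (y \<otimes>\<^bsub>G\<^esub> z)) \<and>
     (\<forall>x \<in> K. \<forall>y \<in> K. Prj x * Prj y = \<alpha> x y \<cdot>\<^sub>m Prj (x \<otimes>\<^bsub>G\<^esub> y))"

definition strong_ext_rep ::
  "('a, 'b) monoid_scheme \<Rightarrow> 'a set \<Rightarrow> 'a set \<Rightarrow> nat \<Rightarrow> ('a \<Rightarrow> complex mat) \<Rightarrow> ('a \<Rightarrow> complex mat) \<Rightarrow> bool" where
  "strong_ext_rep G N K m \<Theta> Prj \<longleftrightarrow>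
     (\<exists>\<alpha>. proj_rep G K m Prj \<alpha>) \<and>
     (\<forall>x \<in> K. \<forall>n \<in> N. Prj (x \<otimes>\<^bsub>G\<^esub> n) = Prj x * \<Theta> n \<and> Prj (n \<otimes>\<^bsub>G\<^esub> x) = \<Theta> n * Prj x)"

definition strong_ext ::
  "('a, 'b) monoid_scheme \<Rightarrow> 'a topology \<Rightarrow> 'a set \<Rightarrow> 'a set \<Rightarrow> ('a \<Rightarrow> complex) \<Rightarrow> ('a \<Rightarrow> complex) \<Rightarrow> bool" where
  "strong_ext G T N K \<theta> \<theta>h \<longleftrightarrow>
     (\<exists>m \<Theta> Prj. cont_rep G T N m \<Theta> \<and> affords N \<Theta> \<theta> \<and>
        strong_ext_rep G N K m \<Theta> Prj \<and> (\<forall>x \<in> K. \<theta>h x = mat_trace (Prj x)))"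

end

(*
  Suppose theta_hat(x n) = 0 for all n in N, i.e. tr (Pi x * Theta n) = 0 for all n.  The
  representation Theta affording theta has the same character as an irreducible representation
  Theta', so the linear span of the pairs (Theta n, Theta' n) is an algebra whose second
  projection is, by Burnside's theorem, all of M_m(C).  Lifting the matrix units along this
  projection gives m^2 elements of the span of Theta(N) that are dual under the trace form, hence
  a basis of M_m(C); so Pi x = 0, which is impossible for an invertible matrix.

  For the uniqueness, theta_hat is invariant under conjugation by N, so ^g theta_hat depends only
  on gN; evaluating ^g theta_hat = theta_hat * psi_g * mu at a point x n where theta_hat does not
  vanish determines mu x = mu (x n).
*)

theory Submission
  imports Defs "Jordan_Normal_Form.Spectral_Radius"
begin

lemma mult_mat_vec_unit_vec:
  fixes A :: "'a::semiring_1 mat"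
  assumes "A \<in> carrier_mat nr nc" "j < nc"
  shows "A *\<^sub>v unit_vec nc j = col A j"
  using assms by (intro eq_vecI) auto

lemma mult_mat_vec_zero:
  fixes A :: "'a::semiring_0 mat"
  shows "A \<in> carrier_mat nr nc \<Longrightarrow> A *\<^sub>v 0\<^sub>v nc = 0\<^sub>v nr"
  by (intro eq_vecI) auto

lemma smult_mat_mult_mat_vec:
  fixes X :: "'a::comm_ring_1 mat"
  assumes "X \<in> carrier_mat nr nc" "v \<in> carrier_vec nc"
  shows "(c \<cdot>\<^sub>m X) *\<^sub>v v = c \<cdot>\<^sub>v (X *\<^sub>v v)"
  using assms by (intro eq_vecI) (auto simp: scalar_prod_def sum_distrib_left mult.assoc)

lemma index_mult_mat_as_mult_mat_vec:
  fixes X Y :: "'a::comm_ring_1 mat"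
  assumes "X \<in> carrier_mat nr n" "Y \<in> carrier_mat n nc" "p < nr" "j < nc"
  shows "(X * Y) $$ (p, j) = (X *\<^sub>v (Y *\<^sub>v unit_vec nc j)) $ p"
  using assms by (simp add: mult_mat_vec_unit_vec)

lemma sum_index_unit_vec:
  fixes x :: "nat \<Rightarrow> 'a::semiring_1"
  assumes "q < m"
  shows "(\<Sum>j<m. x j * unit_vec m j $ q) = x q"
  using assms by (subst sum.remove[of _ q]) auto

lemma sum_lessThan_square_div_mod:
  fixes f :: "nat \<Rightarrow> nat \<Rightarrow> 'a::comm_monoid_add"
  shows "(\<Sum>r<m * m. f (r div m) (r mod m)) = (\<Sum>p<m. \<Sum>q<m. f p q)"
proof -
  have "(\<Sum>r<m * m. f (r div m) (r mod m)) = (\<Sum>p<m. \<Sum>q<m. f ((q + p * m) div m) ((q + p * m) mod m))"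
    by (rule sum_mult_product)
  also have "\<dots> = (\<Sum>p<m. \<Sum>q<m. f p q)"
    by (intro sum.cong refl) auto
  finally show ?thesis .
qed

lemma div_mod_less_square:
  fixes r m :: nat
  assumes "r < m * m"
  shows "r div m < m" "r mod m < m"
proof -
  have "0 < m" using assms by (cases m) auto
  then show "r div m < m" "r mod m < m" using assms by (auto simp: less_mult_imp_div_less)
qed

lemma mat_trace_mult:
  fixes X Y :: "complex mat"
  assumes "X \<in> carrier_mat m m" "Y \<in> carrier_mat m m"
  shows "mat_trace (X * Y) = (\<Sum>p<m. \<Sum>q<m. X $$ (p, q) * Y $$ (q, p))"
  using assms by (simp add: mat_trace_def scalar_prod_def atLeast0LessThan)

lemma mat_trace_mult_flat:
  fixes X Y :: "complex mat"
  assumes "X \<in> carrier_mat m m" "Y \<in> carrier_mat m m"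
  shows "mat_trace (X * Y) = (\<Sum>r<m * m. Y $$ (r mod m, r div m) * X $$ (r div m, r mod m))"
  using sum_lessThan_square_div_mod[of "\<lambda>p q. Y $$ (q, p) * X $$ (p, q)" m]
  unfolding mat_trace_mult[OF assms] by (simp add: mult.commute)

lemma mat_trace_mult_comm:
  fixes X Y :: "complex mat"
  assumes "X \<in> carrier_mat m m" "Y \<in> carrier_mat m m"
  shows "mat_trace (X * Y) = mat_trace (Y * X)"
  unfolding mat_trace_mult[OF assms] mat_trace_mult[OF assms(2,1)]
  by (subst sum.swap) (simp add: mult.commute)

lemma mat_trace_add:
  "X \<in> carrier_mat m m \<Longrightarrow> Y \<in> carrier_mat m m \<Longrightarrow> mat_trace (X + Y) = mat_trace X + mat_trace Y"
  by (simp add: mat_trace_def sum.distrib)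

lemma mat_trace_smult: "X \<in> carrier_mat m m \<Longrightarrow> mat_trace (c \<cdot>\<^sub>m X) = c * mat_trace X"
  by (simp add: mat_trace_def sum_distrib_left)

lemma mat_trace_one: "mat_trace (1\<^sub>m m) = of_nat m"
  by (simp add: mat_trace_def)

definition mat_unit :: "nat \<Rightarrow> nat \<Rightarrow> nat \<Rightarrow> complex mat" where
  "mat_unit m i j = mat m m (\<lambda>(p, q). of_bool (p = i \<and> q = j))"

lemma mat_trace_mat_unit_mult:
  assumes "i < m" "j < m" "k < m" "l < m"
  shows "mat_trace (mat_unit m j i * mat_unit m k l) = of_bool (i = k \<and> j = l)"
  using assms by (simp add: mat_trace_mult[of _ m] mat_unit_def of_bool_conj sum.delta mult.assoc)

lemma invertible_mat_inverse:
  fixes A :: "'a::semiring_1 mat"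
  assumes "A \<in> carrier_mat m m" "invertible_mat A"
  obtains B where "B \<in> carrier_mat m m" "A * B = 1\<^sub>m m" "B * A = 1\<^sub>m m"
proof -
  obtain B where AB: "A * B = 1\<^sub>m m" and BA: "B * A = 1\<^sub>m (dim_row B)"
    using assms unfolding invertible_mat_def inverts_mat_def by auto
  have "dim_col B = m" using arg_cong[OF AB, of dim_col] by simp
  moreover have "dim_row B = m" using arg_cong[OF BA, of dim_col] assms(1) by simp
  ultimately show thesis using AB BA by (intro that) auto
qed

lemma invertible_mat_idem_eq_one:
  fixes A :: "'a::semiring_1 mat"
  assumes "A \<in> carrier_mat m m" "invertible_mat A" and idem: "A * A = A"
  shows "A = 1\<^sub>m m"
proof -
  obtain B where B: "B \<in> carrier_mat m m" "B * A = 1\<^sub>m m"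
    using invertible_mat_inverse[OF assms(1,2)] by metis
  have "A = (B * A) * A" using assms(1) B by simp
  also have "\<dots> = B * (A * A)" by (rule assoc_mult_mat) (use assms(1) B in auto)
  finally show ?thesis using idem B by simp
qed

lemma invertible_mat_nonzero:
  fixes A :: "'a::semiring_1 mat"
  assumes "A \<in> carrier_mat m m" "invertible_mat A" "0 < m"
  shows "A \<noteq> 0\<^sub>m m m"
proof
  assume "A = 0\<^sub>m m m"
  moreover obtain B where "B \<in> carrier_mat m m" "B * A = 1\<^sub>m m"
    using invertible_mat_inverse[OF assms(1,2)] by metis
  ultimately have "(0\<^sub>m m m :: 'a mat) $$ (0, 0) = 1\<^sub>m m $$ (0, 0)" by simp
  then show False using \<open>0 < m\<close> by simp
qed

fun mat_sum :: "nat \<Rightarrow> nat \<Rightarrow> (nat \<Rightarrow> 'a::semiring_1 mat) \<Rightarrow> 'a mat" where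
  "mat_sum m 0 f = 0\<^sub>m m m"
| "mat_sum m (Suc k) f = f k + mat_sum m k f"

lemma mat_sum_carrier:
  "(\<And>i. i < k \<Longrightarrow> f i \<in> carrier_mat m m) \<Longrightarrow> mat_sum m k f \<in> carrier_mat m m"
  by (induction k) auto

lemma mat_sum_mult_mat_vec:
  assumes "\<And>i. i < k \<Longrightarrow> f i \<in> carrier_mat m m" "v \<in> carrier_vec m" "p < m"
  shows "(mat_sum m k f *\<^sub>v v) $ p = (\<Sum>i<k. (f i *\<^sub>v v) $ p)"
  using assms
proof (induction k)
  case (Suc k)
  have carriers: "f k \<in> carrier_mat m m" "mat_sum m k f \<in> carrier_mat m m"
    using Suc.prems by (auto intro: mat_sum_carrier)
  then have "mat_sum m (Suc k) f *\<^sub>v v = f k *\<^sub>v v + mat_sum m k f *\<^sub>v v"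
    using add_mult_distrib_mat_vec Suc.prems(2) by simp
  then show ?case using Suc carriers by (simp add: add.commute)
qed simp

section \<open>Burnside's theorem\<close>

locale matrix_algebra =
  fixes m :: nat and A :: "complex mat set"
  assumes carrier: "A \<subseteq> carrier_mat m m"
    and one_closed: "1\<^sub>m m \<in> A"
    and add_closed: "a \<in> A \<Longrightarrow> b \<in> A \<Longrightarrow> a + b \<in> A"
    and mult_closed: "a \<in> A \<Longrightarrow> b \<in> A \<Longrightarrow> a * b \<in> A"
    and smult_closed: "a \<in> A \<Longrightarrow> c \<cdot>\<^sub>m a \<in> A"
begin

lemma carrier_mat_of: "a \<in> A \<Longrightarrow> a \<in> carrier_mat m m"
  using carrier by blast

lemma zero_closed: "0\<^sub>m m m \<in> A"
proof -
  have "0 \<cdot>\<^sub>m 1\<^sub>m m = (0\<^sub>m m m :: complex mat)" by (intro eq_matI) auto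
  then show ?thesis using smult_closed[OF one_closed, of 0] by simp
qed

lemma diff_closed:
  assumes "a \<in> A" "b \<in> A"
  shows "a - b \<in> A"
proof -
  have "a - b = a + (-1) \<cdot>\<^sub>m b"
    using carrier_mat_of[OF assms(1)] carrier_mat_of[OF assms(2)] by (intro eq_matI) auto
  then show ?thesis using assms by (simp add: add_closed smult_closed)
qed

lemma mat_sum_closed: "(\<And>i. i < k \<Longrightarrow> f i \<in> A) \<Longrightarrow> mat_sum m k f \<in> A"
  by (induction k) (auto intro: add_closed zero_closed)

end

(* Jacobson density on the first k unit vectors; Burnside's theorem is the case k = m. *)
definition interpolating :: "nat \<Rightarrow> nat \<Rightarrow> complex mat set \<Rightarrow> bool" where
  "interpolating m k A \<longleftrightarrow>
     (\<forall>w. (\<forall>i<k. w i \<in> carrier_vec m) \<longrightarrow> (\<exists>a\<in>A. \<forall>i<k. a *\<^sub>v unit_vec m i = w i))"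

context matrix_algebra
begin

lemma interpolating_units:
  assumes "interpolating m k A"
  obtains U where "\<And>i j. i < k \<Longrightarrow> j < m \<Longrightarrow> U i j \<in> A"
    and "\<And>i j l. i < k \<Longrightarrow> j < m \<Longrightarrow> l < k \<Longrightarrow>
           U i j *\<^sub>v unit_vec m l = (if l = i then unit_vec m j else 0\<^sub>v m)"
proof -
  have "\<exists>a\<in>A. \<forall>l<k. a *\<^sub>v unit_vec m l = (if l = i then unit_vec m j else 0\<^sub>v m)" for i j
    using assms[unfolded interpolating_def, rule_format,
        of "\<lambda>l. if l = i then unit_vec m j else 0\<^sub>v m"] by auto
  then obtain U where "\<And>i j. U i j \<in> A \<and>
      (\<forall>l<k. U i j *\<^sub>v unit_vec m l = (if l = i then unit_vec m j else 0\<^sub>v m))"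
    by metis
  then show thesis by (intro that) auto
qed

lemma invariant_subspace_annihilator_image:
  "invariant_subspace A m (\<lambda>a. a)
     {s *\<^sub>v unit_vec m k | s. s \<in> A \<and> (\<forall>i<k. s *\<^sub>v unit_vec m i = 0\<^sub>v m)}"
  (is "invariant_subspace A m (\<lambda>a. a) ?W")
  unfolding invariant_subspace_def
proof (intro conjI allI ballI)
  show "?W \<subseteq> carrier_vec m"
    by (auto intro: mult_mat_vec_carrier[OF carrier_mat_of])
  show "0\<^sub>v m \<in> ?W"
    using zero_closed by (auto intro!: exI[of _ "0\<^sub>m m m"])
next
  fix v w assume "v \<in> ?W" "w \<in> ?W"
  then obtain s t where "v = s *\<^sub>v unit_vec m k" "s \<in> A" "\<forall>i<k. s *\<^sub>v unit_vec m i = 0\<^sub>v m"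
    and "w = t *\<^sub>v unit_vec m k" "t \<in> A" "\<forall>i<k. t *\<^sub>v unit_vec m i = 0\<^sub>v m"
    by blast
  moreover note distrib =
    add_mult_distrib_mat_vec[OF carrier_mat_of carrier_mat_of unit_vec_carrier]
  ultimately show "v + w \<in> ?W"
    by (intro CollectI exI[of _ "s + t"]) (simp add: add_closed distrib)
next
  fix c :: complex and v assume "v \<in> ?W"
  then obtain s where "v = s *\<^sub>v unit_vec m k" "s \<in> A" "\<forall>i<k. s *\<^sub>v unit_vec m i = 0\<^sub>v m"
    by blast
  moreover note distrib = smult_mat_mult_mat_vec[OF carrier_mat_of unit_vec_carrier]
  moreover have "c \<cdot>\<^sub>v 0\<^sub>v m = 0\<^sub>v m" by (intro eq_vecI) auto
  ultimately show "c \<cdot>\<^sub>v v \<in> ?W"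
    by (intro CollectI exI[of _ "c \<cdot>\<^sub>m s"]) (simp add: smult_closed distrib)
next
  fix a v assume "a \<in> A" "v \<in> ?W"
  moreover from \<open>v \<in> ?W\<close> obtain s where
    "v = s *\<^sub>v unit_vec m k" "s \<in> A" "\<forall>i<k. s *\<^sub>v unit_vec m i = 0\<^sub>v m"
    by blast
  moreover note assoc = assoc_mult_mat_vec[OF carrier_mat_of carrier_mat_of unit_vec_carrier]
  ultimately show "a *\<^sub>v v \<in> ?W"
    by (intro CollectI exI[of _ "a * s"])
      (simp add: mult_closed assoc mult_mat_vec_zero[OF carrier_mat_of])
qed

context
  fixes k :: nat and U :: "nat \<Rightarrow> nat \<Rightarrow> complex mat"
  assumes units_in: "\<And>i j. i < k \<Longrightarrow> j < m \<Longrightarrow> U i j \<in> A"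
    and units_unit_vec: "\<And>i j l. i < k \<Longrightarrow> j < m \<Longrightarrow> l < k \<Longrightarrow>
       U i j *\<^sub>v unit_vec m l = (if l = i then unit_vec m j else 0\<^sub>v m)"
begin

definition interpolant :: "(nat \<Rightarrow> complex vec) \<Rightarrow> complex mat" where
  "interpolant w = mat_sum m k (\<lambda>i. mat_sum m m (\<lambda>j. (w i $ j) \<cdot>\<^sub>m U i j))"

definition next_col_mat :: "nat \<Rightarrow> complex mat" where
  "next_col_mat i = mat m m (\<lambda>(p, j). (U i j *\<^sub>v unit_vec m k) $ p)"

lemma units_carrier: "i < k \<Longrightarrow> j < m \<Longrightarrow> U i j \<in> carrier_mat m m"
  using units_in carrier_mat_of by blast

lemma next_col_mat_carrier: "next_col_mat i \<in> carrier_mat m m"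
  by (simp add: next_col_mat_def)

lemma interpolant_in: "interpolant w \<in> A"
  unfolding interpolant_def by (intro mat_sum_closed smult_closed units_in)

lemma interpolant_mult_mat_vec:
  assumes "v \<in> carrier_vec m" "p < m"
  shows "(interpolant w *\<^sub>v v) $ p = (\<Sum>i<k. \<Sum>j<m. w i $ j * (U i j *\<^sub>v v) $ p)"
proof -
  have "(interpolant w *\<^sub>v v) $ p = (\<Sum>i<k. \<Sum>j<m. ((w i $ j \<cdot>\<^sub>m U i j) *\<^sub>v v) $ p)"
    unfolding interpolant_def using assms units_carrier
    by (simp add: mat_sum_mult_mat_vec mat_sum_carrier)
  also have "\<dots> = (\<Sum>i<k. \<Sum>j<m. w i $ j * (U i j *\<^sub>v v) $ p)"
    using assms units_carrier
    by (intro sum.cong refl) (auto simp: smult_mat_mult_mat_vec[OF units_carrier assms(1)]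
      carrier_matD[OF units_carrier])
  finally show ?thesis .
qed

lemma interpolant_unit_vec:
  assumes "l < k" "w l \<in> carrier_vec m"
  shows "interpolant w *\<^sub>v unit_vec m l = w l"
proof (rule eq_vecI)
  fix q assume "q < dim_vec (w l)"
  then have q: "q < m" using assms(2) by simp
  have "(interpolant w *\<^sub>v unit_vec m l) $ q
      = (\<Sum>i<k. \<Sum>j<m. w i $ j * (U i j *\<^sub>v unit_vec m l) $ q)"
    using q by (simp add: interpolant_mult_mat_vec)
  also have "\<dots> = (\<Sum>i<k. if i = l then w l $ q else 0)"
    using assms(1) q by (intro sum.cong refl)
      (auto simp: units_unit_vec sum_index_unit_vec simp del: index_unit_vec)
  also have "\<dots> = w l $ q"
    using assms(1) by simp
  finally show "(interpolant w *\<^sub>v unit_vec m l) $ q = w l $ q" .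
qed (use assms interpolant_in carrier_mat_of in auto)

lemma interpolant_next_col:
  assumes "\<And>i. i < k \<Longrightarrow> w i \<in> carrier_vec m" "p < m"
  shows "(interpolant w *\<^sub>v unit_vec m k) $ p = (\<Sum>i<k. (next_col_mat i *\<^sub>v w i) $ p)"
proof -
  have "(interpolant w *\<^sub>v unit_vec m k) $ p = (\<Sum>i<k. \<Sum>j<m. w i $ j * (U i j *\<^sub>v unit_vec m k) $ p)"
    using assms(2) by (simp add: interpolant_mult_mat_vec)
  also have "\<dots> = (\<Sum>i<k. (next_col_mat i *\<^sub>v w i) $ p)"
    using assms by (intro sum.cong refl)
      (auto simp: next_col_mat_def scalar_prod_def atLeast0LessThan mult.commute
        carrier_vecD[OF assms(1)])
  finally show ?thesis .
qed

(*
  If every element of A killing e_0, ..., e_(k-1) also kills e_k, then a e_k is a linear function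
  of (a e_0, ..., a e_(k-1)); next_col_mat i is its i-th block, and it commutes with A.
*)
context
  assumes annihilating: "\<And>a. a \<in> A \<Longrightarrow> (\<forall>i<k. a *\<^sub>v unit_vec m i = 0\<^sub>v m) \<Longrightarrow>
    a *\<^sub>v unit_vec m k = 0\<^sub>v m"
begin

lemma next_col_by_interpolation:
  assumes a: "a \<in> A" and p: "p < m"
  shows "(a *\<^sub>v unit_vec m k) $ p = (\<Sum>i<k. (next_col_mat i *\<^sub>v (a *\<^sub>v unit_vec m i)) $ p)"
proof -
  define a' where "a' = interpolant (\<lambda>i. a *\<^sub>v unit_vec m i)"
  have carriers: "a \<in> carrier_mat m m" "a' \<in> carrier_mat m m"
    using a interpolant_in carrier_mat_of unfolding a'_def by auto
  have "(a - a') *\<^sub>v unit_vec m i = 0\<^sub>v m" if "i < k" for i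
    using that carriers unfolding a'_def
    by (simp add: minus_mult_distrib_mat_vec interpolant_unit_vec)
  then have "(a - a') *\<^sub>v unit_vec m k = 0\<^sub>v m"
    using annihilating diff_closed a interpolant_in unfolding a'_def by blast
  then have "a *\<^sub>v unit_vec m k - a' *\<^sub>v unit_vec m k = 0\<^sub>v m"
    using carriers by (simp add: minus_mult_distrib_mat_vec)
  then have "(a *\<^sub>v unit_vec m k - a' *\<^sub>v unit_vec m k) $ p = 0"
    using p by simp
  then have "(a *\<^sub>v unit_vec m k) $ p = (a' *\<^sub>v unit_vec m k) $ p"
    using carriers p by simp
  then show ?thesis using carriers(1) p unfolding a'_def by (simp add: interpolant_next_col)
qed

lemma next_col_mat_commute:
  assumes b: "b \<in> A" and i: "i < k"
  shows "next_col_mat i * b = b * next_col_mat i"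
proof (rule eq_matI)
  fix p j assume "p < dim_row (b * next_col_mat i)" "j < dim_col (b * next_col_mat i)"
  then have pj: "p < m" "j < m" using carrier_mat_of[OF b] by (auto simp: next_col_mat_def)
  have bc: "b \<in> carrier_mat m m" and Mc: "\<And>l. next_col_mat l \<in> carrier_mat m m"
    and Uc: "U i j \<in> carrier_mat m m"
    using b i pj carrier_mat_of units_carrier by (auto simp: next_col_mat_def)
  have "next_col_mat i *\<^sub>v unit_vec m j = U i j *\<^sub>v unit_vec m k"
    using pj Uc by (intro eq_vecI) (auto simp: mult_mat_vec_unit_vec[OF Mc] next_col_mat_def)
  then have "(b * next_col_mat i) $$ (p, j) = ((b * U i j) *\<^sub>v unit_vec m k) $ p"
    using bc Mc Uc pj by (simp add: index_mult_mat_as_mult_mat_vec[OF bc Mc])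
  also have "\<dots> = (\<Sum>l<k. (next_col_mat l *\<^sub>v ((b * U i j) *\<^sub>v unit_vec m l)) $ p)"
    using b i pj by (intro next_col_by_interpolation mult_closed units_in)
  also have "\<dots> = (\<Sum>l<k. if l = i then (next_col_mat i *\<^sub>v (b *\<^sub>v unit_vec m j)) $ p else 0)"
    using bc Uc Mc pj i
    by (intro sum.cong) (auto simp: units_unit_vec mult_mat_vec_zero[OF bc] mult_mat_vec_zero[OF Mc])
  also have "\<dots> = (next_col_mat i * b) $$ (p, j)"
    using i pj by (simp add: index_mult_mat_as_mult_mat_vec[OF Mc bc])
  finally show "(next_col_mat i * b) $$ (p, j) = (b * next_col_mat i) $$ (p, j)" ..
qed (use carrier_mat_of[OF b] in \<open>auto simp: next_col_mat_def\<close>)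

end

end

end

locale irreducible_matrix_algebra = matrix_algebra +
  assumes irreducible: "irreducible_rep A m (\<lambda>a. a)"
begin

lemma dim_pos: "0 < m"
  using irreducible unfolding irreducible_rep_def by simp

lemma invariant_subspace_eq_carrier:
  assumes "invariant_subspace A m (\<lambda>a. a) W" "v \<in> W" "v \<noteq> 0\<^sub>v m"
  shows "W = carrier_vec m"
  using irreducible assms unfolding irreducible_rep_def by blast

lemma commuting_mat_is_scalar:
  assumes M: "M \<in> carrier_mat m m" and comm: "\<And>b. b \<in> A \<Longrightarrow> M * b = b * M"
  shows "\<exists>c. M = c \<cdot>\<^sub>m 1\<^sub>m m"
proof -
  obtain l where "l \<in> spectrum M" using spectrum_non_empty[OF M dim_pos] by auto
  then obtain v where v: "v \<in> carrier_vec m" "v \<noteq> 0\<^sub>v m" "M *\<^sub>v v = l \<cdot>\<^sub>v v"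
    using M unfolding spectrum_def eigenvalue_def eigenvector_def by auto
  define W where "W = {w \<in> carrier_vec m. M *\<^sub>v w = l \<cdot>\<^sub>v w}"
  have "invariant_subspace A m (\<lambda>a. a) W"
    unfolding invariant_subspace_def
  proof (intro conjI allI ballI)
    fix a w assume a: "a \<in> A" and w: "w \<in> W"
    have aM: "a \<in> carrier_mat m m" "w \<in> carrier_vec m" "M *\<^sub>v w = l \<cdot>\<^sub>v w"
      using carrier_mat_of[OF a] w by (auto simp: W_def)
    have "M *\<^sub>v (a *\<^sub>v w) = (a * M) *\<^sub>v w"
      using M aM comm[OF a] by (metis assoc_mult_mat_vec)
    also have "\<dots> = l \<cdot>\<^sub>v (a *\<^sub>v w)"
      using M aM by (simp add: mult_mat_vec)
    finally show "a *\<^sub>v w \<in> W" using carrier_mat_of[OF a] w by (simp add: W_def)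
  qed (use M in \<open>auto simp: W_def mult_add_distrib_mat_vec smult_add_distrib_vec
         mult_mat_vec smult_smult_assoc mult.commute\<close>)
  then have W: "W = carrier_vec m"
    by (rule invariant_subspace_eq_carrier) (use v in \<open>auto simp: W_def\<close>)
  have "M = l \<cdot>\<^sub>m 1\<^sub>m m"
  proof (rule mat_col_eqI)
    fix j assume "j < dim_col (l \<cdot>\<^sub>m 1\<^sub>m m)"
    then have j: "j < m" by simp
    have "unit_vec m j \<in> W" using W by simp
    then show "col M j = col (l \<cdot>\<^sub>m 1\<^sub>m m) j"
      using mult_mat_vec_unit_vec[OF M j] j by (auto simp: W_def)
  qed (use M in auto)
  then show ?thesis ..
qed

lemma interpolating_separates:
  assumes "interpolating m k A" "k < m"
  shows "\<exists>s\<in>A. (\<forall>i<k. s *\<^sub>v unit_vec m i = 0\<^sub>v m) \<and> s *\<^sub>v unit_vec m k \<noteq> 0\<^sub>v m"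
proof (rule ccontr)
  assume "\<not> ?thesis"
  then have annihilating: "\<And>a. a \<in> A \<Longrightarrow> (\<forall>i<k. a *\<^sub>v unit_vec m i = 0\<^sub>v m) \<Longrightarrow>
      a *\<^sub>v unit_vec m k = 0\<^sub>v m" by blast
  obtain U where U: "\<And>i j. i < k \<Longrightarrow> j < m \<Longrightarrow> U i j \<in> A"
    "\<And>i j l. i < k \<Longrightarrow> j < m \<Longrightarrow> l < k \<Longrightarrow>
       U i j *\<^sub>v unit_vec m l = (if l = i then unit_vec m j else 0\<^sub>v m)"
    using interpolating_units[OF assms(1)] by metis
  have "\<exists>c. next_col_mat k U i = c \<cdot>\<^sub>m 1\<^sub>m m" if "i < k" for i
    by (rule commuting_mat_is_scalar)
      (auto intro: next_col_mat_carrier[OF U] next_col_mat_commute[OF U annihilating _ that])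
  then obtain c where c: "\<And>i. i < k \<Longrightarrow> next_col_mat k U i = c i \<cdot>\<^sub>m 1\<^sub>m m" by metis
  \<comment> \<open>taking a = 1 now writes e_k as a combination of e_0, ..., e_(k-1)\<close>
  have "(1::complex) = (1\<^sub>m m *\<^sub>v unit_vec m k) $ k" using assms(2) by simp
  also have "\<dots> = (\<Sum>i<k. (next_col_mat k U i *\<^sub>v (1\<^sub>m m *\<^sub>v unit_vec m i)) $ k)"
    by (rule next_col_by_interpolation[OF U annihilating one_closed assms(2)])
  also have "\<dots> = 0"
    using c assms(2) by (intro sum.neutral) (auto simp: smult_mat_mult_mat_vec[of _ m m])
  finally show False by simp
qed

lemma interpolating_Suc:
  assumes IH: "interpolating m k A" and k: "k < m"
  shows "interpolating m (Suc k) A"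
proof -
  define W where "W = {s *\<^sub>v unit_vec m k | s. s \<in> A \<and> (\<forall>i<k. s *\<^sub>v unit_vec m i = 0\<^sub>v m)}"
  have "invariant_subspace A m (\<lambda>a. a) W"
    unfolding W_def by (rule invariant_subspace_annihilator_image)
  moreover obtain s0 where "s0 \<in> A" "\<forall>i<k. s0 *\<^sub>v unit_vec m i = 0\<^sub>v m"
      "s0 *\<^sub>v unit_vec m k \<noteq> 0\<^sub>v m"
    using interpolating_separates[OF IH k] by blast
  ultimately have W: "W = carrier_vec m"
    by (intro invariant_subspace_eq_carrier) (auto simp: W_def)
  show ?thesis
    unfolding interpolating_def
  proof (intro allI impI)
    fix w :: "nat \<Rightarrow> complex vec" assume w: "\<forall>i<Suc k. w i \<in> carrier_vec m"
    obtain a0 where a0: "a0 \<in> A" "\<forall>i<k. a0 *\<^sub>v unit_vec m i = w i"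
      using IH[unfolded interpolating_def, rule_format, of w] w by auto
    have "w k - a0 *\<^sub>v unit_vec m k \<in> W"
      using W w carrier_mat_of[OF a0(1)] by auto
    then obtain s where s: "s \<in> A" "\<forall>i<k. s *\<^sub>v unit_vec m i = 0\<^sub>v m"
        "w k - a0 *\<^sub>v unit_vec m k = s *\<^sub>v unit_vec m k"
      unfolding W_def by blast
    have "(a0 + s) *\<^sub>v unit_vec m i = w i" if "i < Suc k" for i
    proof -
      have "(a0 + s) *\<^sub>v unit_vec m i = a0 *\<^sub>v unit_vec m i + s *\<^sub>v unit_vec m i"
        using add_mult_distrib_mat_vec[OF carrier_mat_of[OF a0(1)] carrier_mat_of[OF s(1)]] by simp
      also have "\<dots> = w i"
      proof (cases "i < k")
        case True
        then show ?thesis using a0 s w by simp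
      next
        case False
        then have "i = k" using that by simp
        then show ?thesis using s(3)[symmetric] w carrier_mat_of[OF a0(1)]
          by (intro eq_vecI) auto
      qed
      finally show ?thesis .
    qed
    then show "\<exists>a\<in>A. \<forall>i<Suc k. a *\<^sub>v unit_vec m i = w i"
      using add_closed a0(1) s(1) by blast
  qed
qed

lemma interpolating_upto: "k \<le> m \<Longrightarrow> interpolating m k A"
proof (induction k)
  case 0
  show ?case using one_closed by (auto simp: interpolating_def)
next
  case (Suc k)
  then show ?case by (simp add: interpolating_Suc)
qed

theorem burnside: "A = carrier_mat m m"
proof
  show "carrier_mat m m \<subseteq> A"
  proof
    fix E :: "complex mat" assume E: "E \<in> carrier_mat m m"
    obtain a where a: "a \<in> A" "\<forall>i<m. a *\<^sub>v unit_vec m i = col E i"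
      using interpolating_upto[of m, unfolded interpolating_def, rule_format, of "col E"] E
      by auto
    have "a = E"
      using a E carrier_mat_of[OF a(1)] by (intro mat_col_eqI) (auto simp: mult_mat_vec_unit_vec)
    then show "E \<in> A" using a by simp
  qed
qed (rule carrier)

end

section \<open>Matrices trace-orthogonal to a representation\<close>

lemma trace_dual_family_orthogonal_eq_0:
  fixes F D :: "nat \<Rightarrow> nat \<Rightarrow> complex mat"
  assumes carrier: "\<And>i j. i < m \<Longrightarrow> j < m \<Longrightarrow> F i j \<in> carrier_mat m m \<and> D i j \<in> carrier_mat m m"
    and dual: "\<And>i j k l. i < m \<Longrightarrow> j < m \<Longrightarrow> k < m \<Longrightarrow> l < m \<Longrightarrow>
      mat_trace (D i j * F k l) = of_bool (i = k \<and> j = l)"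
    and P: "P \<in> carrier_mat m m"
    and orth: "\<And>k l. k < m \<Longrightarrow> l < m \<Longrightarrow> mat_trace (P * F k l) = 0"
  shows "P = 0\<^sub>m m m"
proof -
  define n where "n = m * m"
  have idx: "r div m < m" "r mod m < m" if "r < n" for r
    using that div_mod_less_square unfolding n_def by blast+
  note flat_trace = mat_trace_mult_flat[where m = m, folded n_def]
  \<comment> \<open>Vectorising, G has the rows F k l and B the columns D i j, so G * B = 1; being square, G is
    then invertible, and G v = 0 forces v = vec P = 0.\<close>
  define G where "G = mat n n (\<lambda>(c, r). F (c div m) (c mod m) $$ (r mod m, r div m))"
  define B where "B = mat n n (\<lambda>(r, b). D (b div m) (b mod m) $$ (r div m, r mod m))"
  define v where "v = vec n (\<lambda>r. P $$ (r div m, r mod m))"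
  have G: "G \<in> carrier_mat n n" and B: "B \<in> carrier_mat n n" and v: "v \<in> carrier_vec n"
    by (simp_all add: G_def B_def v_def)
  have "G * B = 1\<^sub>m n"
  proof (rule eq_matI)
    fix c b assume "c < dim_row (1\<^sub>m n :: complex mat)" "b < dim_col (1\<^sub>m n :: complex mat)"
    then have cb: "c < n" "b < n" by simp_all
    have "(G * B) $$ (c, b) = mat_trace (D (b div m) (b mod m) * F (c div m) (c mod m))"
      using cb idx carrier
      by (simp add: flat_trace G_def B_def scalar_prod_def atLeast0LessThan)
    also have "\<dots> = of_bool (b div m = c div m \<and> b mod m = c mod m)"
      using cb idx dual by simp
    also have "\<dots> = of_bool (b = c)"
    proof -
      have "b div m = c div m \<and> b mod m = c mod m \<longleftrightarrow> b = c" by (metis div_mult_mod_eq)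
      then show ?thesis by simp
    qed
    finally show "(G * B) $$ (c, b) = 1\<^sub>m n $$ (c, b)" using cb by auto
  qed (simp_all add: G_def B_def)
  then have BG: "B * G = 1\<^sub>m n" by (rule mat_mult_left_right_inverse[OF G B])
  have "G *\<^sub>v v = 0\<^sub>v n"
  proof (rule eq_vecI)
    fix c assume "c < dim_vec (0\<^sub>v n :: complex vec)"
    then have c: "c < n" by simp
    have "(G *\<^sub>v v) $ c = mat_trace (P * F (c div m) (c mod m))"
      using c idx carrier P by (simp add: flat_trace G_def v_def scalar_prod_def atLeast0LessThan)
    then show "(G *\<^sub>v v) $ c = 0\<^sub>v n $ c" using c idx orth by simp
  qed (simp add: G_def)
  then have "v = 0\<^sub>v n"
    using assoc_mult_mat_vec[OF B G v] BG v by (simp add: mult_mat_vec_zero[OF B])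
  then show ?thesis
  proof (intro eq_matI)
    fix p q assume "p < dim_row (0\<^sub>m m m :: complex mat)" "q < dim_col (0\<^sub>m m m :: complex mat)"
    then have pq: "p < m" "q < m" by simp_all
    have "q + p * m < m + p * m" using pq by simp
    also have "\<dots> \<le> m * m" using mult_le_mono1[of "Suc p" m m] pq by simp
    finally have "q + p * m < n" unfolding n_def .
    then have "P $$ (p, q) = v $ (q + p * m)"
      using pq by (simp add: v_def)
    then show "P $$ (p, q) = 0\<^sub>m m m $$ (p, q)"
      using \<open>v = 0\<^sub>v n\<close> \<open>q + p * m < n\<close> pq by simp
  qed (use P in auto)
qed

lemma irreducible_rep_image_iff: "irreducible_rep (\<Theta> ` H) m (\<lambda>Y. Y) \<longleftrightarrow> irreducible_rep H m \<Theta>"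
  by (simp add: irreducible_rep_def invariant_subspace_def)

lemma irreducible_rep_mono:
  assumes "H \<subseteq> H'" "irreducible_rep H m \<Theta>"
  shows "irreducible_rep H' m \<Theta>"
proof -
  have "invariant_subspace H m \<Theta> W" if "invariant_subspace H' m \<Theta> W" for W
    using that assms(1) unfolding invariant_subspace_def by blast
  then show ?thesis using assms(2) unfolding irreducible_rep_def by blast
qed

inductive_set mat_pair_span ::
  "nat \<Rightarrow> (complex mat \<times> complex mat) set \<Rightarrow> (complex mat \<times> complex mat) set"
  for m S where
  generator: "(X, Y) \<in> S \<Longrightarrow> (X, Y) \<in> mat_pair_span m S"
| zero: "(0\<^sub>m m m, 0\<^sub>m m m) \<in> mat_pair_span m S"
| add: "(X, Y) \<in> mat_pair_span m S \<Longrightarrow> (X', Y') \<in> mat_pair_span m S \<Longrightarrow>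
    (X + X', Y + Y') \<in> mat_pair_span m S"
| smult: "(X, Y) \<in> mat_pair_span m S \<Longrightarrow> (c \<cdot>\<^sub>m X, c \<cdot>\<^sub>m Y) \<in> mat_pair_span m S"

context
  fixes m :: nat and S :: "(complex mat \<times> complex mat) set"
  assumes S_carrier: "S \<subseteq> carrier_mat m m \<times> carrier_mat m m"
begin

lemma mat_pair_span_carrier:
  "(X, Y) \<in> mat_pair_span m S \<Longrightarrow> X \<in> carrier_mat m m \<and> Y \<in> carrier_mat m m"
  by (induction rule: mat_pair_span.induct) (use S_carrier in auto)

lemma mat_pair_span_functional_eq:
  fixes f g :: "complex mat \<Rightarrow> complex"
  assumes f_add: "\<And>X X'. X \<in> carrier_mat m m \<Longrightarrow> X' \<in> carrier_mat m m \<Longrightarrow> f (X + X') = f X + f X'"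
    and f_smult: "\<And>c X. X \<in> carrier_mat m m \<Longrightarrow> f (c \<cdot>\<^sub>m X) = c * f X"
    and g_add: "\<And>Y Y'. Y \<in> carrier_mat m m \<Longrightarrow> Y' \<in> carrier_mat m m \<Longrightarrow> g (Y + Y') = g Y + g Y'"
    and g_smult: "\<And>c Y. Y \<in> carrier_mat m m \<Longrightarrow> g (c \<cdot>\<^sub>m Y) = c * g Y"
    and on_S: "\<And>X Y. (X, Y) \<in> S \<Longrightarrow> f X = g Y"
  shows "(X, Y) \<in> mat_pair_span m S \<Longrightarrow> f X = g Y"
proof (induction rule: mat_pair_span.induct)
  case zero
  have "f (0 \<cdot>\<^sub>m 0\<^sub>m m m) = 0" "g (0 \<cdot>\<^sub>m 0\<^sub>m m m) = 0"
    using f_smult[of "0\<^sub>m m m" 0] g_smult[of "0\<^sub>m m m" 0] by simp_all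
  then show ?case by simp
next
  case (add X Y X' Y')
  then show ?case using f_add g_add mat_pair_span_carrier by metis
next
  case (smult X Y c)
  then show ?case using f_smult g_smult mat_pair_span_carrier by metis
qed (rule on_S)

context
  assumes mult: "\<And>X Y X' Y'. (X, Y) \<in> S \<Longrightarrow> (X', Y') \<in> S \<Longrightarrow> (X * X', Y * Y') \<in> S"
begin

lemma mat_pair_span_mult_generator:
  assumes XY: "(X, Y) \<in> S" and XY': "(X', Y') \<in> mat_pair_span m S"
  shows "(X * X', Y * Y') \<in> mat_pair_span m S"
  using XY'
proof (induction rule: mat_pair_span.induct)
  case (generator X' Y')
  then show ?case using mult XY mat_pair_span.generator by blast
next
  case zero
  have "X * 0\<^sub>m m m = 0\<^sub>m m m" "Y * 0\<^sub>m m m = 0\<^sub>m m m" using XY S_carrier by auto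
  then show ?case using mat_pair_span.zero by metis
next
  case (add X1 Y1 X2 Y2)
  have "X * (X1 + X2) = X * X1 + X * X2" "Y * (Y1 + Y2) = Y * Y1 + Y * Y2"
    using XY S_carrier mat_pair_span_carrier[OF add.hyps(1)] mat_pair_span_carrier[OF add.hyps(2)]
    by (auto simp: mult_add_distrib_mat)
  then show ?case using add.IH mat_pair_span.add by metis
next
  case (smult X1 Y1 c)
  have "X * (c \<cdot>\<^sub>m X1) = c \<cdot>\<^sub>m (X * X1)" "Y * (c \<cdot>\<^sub>m Y1) = c \<cdot>\<^sub>m (Y * Y1)"
    using XY S_carrier mat_pair_span_carrier[OF smult.hyps(1)] by (auto simp: mult_smult_distrib)
  then show ?case using smult.IH mat_pair_span.smult by metis
qed

lemma mat_pair_span_mult: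
  assumes XY: "(X, Y) \<in> mat_pair_span m S" and XY': "(X', Y') \<in> mat_pair_span m S"
  shows "(X * X', Y * Y') \<in> mat_pair_span m S"
  using XY
proof (induction rule: mat_pair_span.induct)
  case (generator X Y)
  then show ?case using XY' mat_pair_span_mult_generator by blast
next
  case zero
  have "0\<^sub>m m m * X' = 0\<^sub>m m m" "0\<^sub>m m m * Y' = 0\<^sub>m m m" using mat_pair_span_carrier[OF XY'] by auto
  then show ?case using mat_pair_span.zero by metis
next
  case (add X1 Y1 X2 Y2)
  have "(X1 + X2) * X' = X1 * X' + X2 * X'" "(Y1 + Y2) * Y' = Y1 * Y' + Y2 * Y'"
    using mat_pair_span_carrier[OF XY'] mat_pair_span_carrier[OF add.hyps(1)]
      mat_pair_span_carrier[OF add.hyps(2)]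
    by (auto simp: add_mult_distrib_mat)
  then show ?case using add.IH mat_pair_span.add by metis
next
  case (smult X1 Y1 c)
  have "(c \<cdot>\<^sub>m X1) * X' = c \<cdot>\<^sub>m (X1 * X')" "(c \<cdot>\<^sub>m Y1) * Y' = c \<cdot>\<^sub>m (Y1 * Y')"
    using mat_pair_span_carrier[OF XY'] mat_pair_span_carrier[OF smult.hyps(1)]
    by (auto simp: mult_smult_assoc_mat)
  then show ?case using smult.IH mat_pair_span.smult by metis
qed

lemma irreducible_matrix_algebra_mat_pair_span:
  assumes unit: "(1\<^sub>m m, 1\<^sub>m m) \<in> S" and irreducible: "irreducible_rep (snd ` S) m (\<lambda>Y. Y)"
  shows "irreducible_matrix_algebra m {Y. \<exists>X. (X, Y) \<in> mat_pair_span m S}"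
    (is "irreducible_matrix_algebra m ?B")
proof
  show "?B \<subseteq> carrier_mat m m" using mat_pair_span_carrier by blast
  show "1\<^sub>m m \<in> ?B" using mat_pair_span.generator[OF unit] by blast
next
  fix a b assume "a \<in> ?B" "b \<in> ?B"
  then obtain X X' where "(X, a) \<in> mat_pair_span m S" "(X', b) \<in> mat_pair_span m S" by blast
  then have "(X + X', a + b) \<in> mat_pair_span m S" "(X * X', a * b) \<in> mat_pair_span m S"
    by (auto intro: mat_pair_span.add mat_pair_span_mult)
  then show "a + b \<in> ?B" "a * b \<in> ?B" by blast+
next
  fix c a assume "a \<in> ?B"
  then obtain X where "(X, a) \<in> mat_pair_span m S" by blast
  then have "(c \<cdot>\<^sub>m X, c \<cdot>\<^sub>m a) \<in> mat_pair_span m S" by (rule mat_pair_span.smult)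
  then show "c \<cdot>\<^sub>m a \<in> ?B" by blast
next
  have "snd ` S \<subseteq> ?B" using mat_pair_span.generator by force
  then show "irreducible_rep ?B m (\<lambda>Y. Y)" using irreducible by (rule irreducible_rep_mono)
qed

end

end

(*
  The first components are not known to form an irreducible set, only to have the same traces as
  the irreducible second components; Burnside's theorem for the second projection of the span is
  transported to the first via the trace form.
*)
theorem trace_orthogonal_eq_0:
  fixes S :: "(complex mat \<times> complex mat) set"
  assumes S_carrier: "S \<subseteq> carrier_mat m m \<times> carrier_mat m m"
    and mult: "\<And>X Y X' Y'. (X, Y) \<in> S \<Longrightarrow> (X', Y') \<in> S \<Longrightarrow> (X * X', Y * Y') \<in> S"
    and unit: "(1\<^sub>m m, 1\<^sub>m m) \<in> S"
    and trace: "\<And>X Y. (X, Y) \<in> S \<Longrightarrow> mat_trace X = mat_trace Y"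
    and irreducible: "irreducible_rep (snd ` S) m (\<lambda>Y. Y)"
    and P: "P \<in> carrier_mat m m" and orth: "\<And>X Y. (X, Y) \<in> S \<Longrightarrow> mat_trace (P * X) = 0"
  shows "P = 0\<^sub>m m m"
proof -
  let ?J = "mat_pair_span m S"
  note J_carrier = mat_pair_span_carrier[OF S_carrier]
  have trace_J: "mat_trace X = mat_trace Y" if "(X, Y) \<in> ?J" for X Y
    by (rule mat_pair_span_functional_eq[OF S_carrier _ _ _ _ _ that,
          where f = mat_trace and g = mat_trace])
      (simp_all add: mat_trace_add mat_trace_smult trace)
  have orth_J: "mat_trace (P * X) = 0" if "(X, Y) \<in> ?J" for X Y
    by (rule mat_pair_span_functional_eq[OF S_carrier _ _ _ _ _ that,
          where f = "\<lambda>X. mat_trace (P * X)" and g = "\<lambda>_. 0"])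
      (use P orth in \<open>simp_all add: mult_add_distrib_mat mult_smult_distrib
        mat_trace_add[OF mult_carrier_mat[OF P] mult_carrier_mat[OF P]]
        mat_trace_smult[OF mult_carrier_mat[OF P]]\<close>)
  interpret irreducible_matrix_algebra m "{Y. \<exists>X. (X, Y) \<in> ?J}"
    using irreducible_matrix_algebra_mat_pair_span[OF S_carrier mult unit irreducible] .
  have "mat_unit m i j \<in> {Y. \<exists>X. (X, Y) \<in> ?J}" for i j
    using burnside by (simp add: mat_unit_def)
  then have "\<exists>X. (X, mat_unit m i j) \<in> ?J" for i j by blast
  then obtain F where F: "\<And>i j. (F i j, mat_unit m i j) \<in> ?J" by metis
  show ?thesis
  proof (rule trace_dual_family_orthogonal_eq_0[where D = "\<lambda>i j. F j i"])
    show "F i j \<in> carrier_mat m m \<and> F j i \<in> carrier_mat m m" for i j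
      using J_carrier[OF F] by simp
    show "mat_trace (F j i * F k l) = of_bool (i = k \<and> j = l)"
      if "i < m" "j < m" "k < m" "l < m" for i j k l
      using trace_J[OF mat_pair_span_mult[OF S_carrier mult F F]] mat_trace_mat_unit_mult[OF that]
      by simp
    show "mat_trace (P * F k l) = 0" for k l
      using orth_J[OF F] .
  qed (rule P)
qed

section \<open>Strong extensions\<close>

lemma Lin_nonzero:
  assumes "Lin G T \<psi>" "y \<in> carrier G"
  shows "\<psi> y \<noteq> 0"
proof -
  obtain \<Psi> where \<Psi>: "cont_rep G T (carrier G) 1 \<Psi>" "affords (carrier G) \<Psi> \<psi>"
    using assms(1) unfolding Lin_def by blast
  then have \<Psi>y: "\<Psi> y \<in> carrier_mat 1 1" "invertible_mat (\<Psi> y)"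
    using assms(2) unfolding cont_rep_def by auto
  have "\<psi> y = \<Psi> y $$ (0, 0)"
    using \<Psi>(2) assms(2) \<Psi>y(1) unfolding affords_def mat_trace_def by simp
  moreover have "\<Psi> y \<noteq> 0\<^sub>m 1 1" using invertible_mat_nonzero[OF \<Psi>y] by simp
  ultimately show ?thesis using \<Psi>y(1) by (auto intro!: eq_matI)
qed

lemma cont_rep_carrier:
  "cont_rep G T N m \<Theta> \<Longrightarrow> n \<in> N \<Longrightarrow> \<Theta> n \<in> carrier_mat m m \<and> invertible_mat (\<Theta> n)"
  unfolding cont_rep_def by blast

lemma cont_rep_mult:
  "cont_rep G T N m \<Theta> \<Longrightarrow> a \<in> N \<Longrightarrow> b \<in> N \<Longrightarrow> \<Theta> (a \<otimes>\<^bsub>G\<^esub> b) = \<Theta> a * \<Theta> b"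
  unfolding cont_rep_def by blast

context group
begin

lemma cont_rep_one:
  assumes "subgroup N G" "cont_rep G T N m \<Theta>"
  shows "\<Theta> \<one> = 1\<^sub>m m"
proof -
  have one: "\<one> \<in> N" using subgroup.one_closed[OF assms(1)] .
  have "\<Theta> \<one> * \<Theta> \<one> = \<Theta> \<one>"
    using cont_rep_mult[OF assms(2) one one] by simp
  then show ?thesis
    using cont_rep_carrier[OF assms(2) one] invertible_mat_idem_eq_one by blast
qed

lemma cont_rep_mult_inv:
  assumes "subgroup N G" "cont_rep G T N m \<Theta>" "n \<in> N"
  shows "\<Theta> n * \<Theta> (inv n) = 1\<^sub>m m"
proof -
  have "inv n \<in> N" using subgroup.m_inv_closed[OF assms(1,3)] .
  then have "\<Theta> n * \<Theta> (inv n) = \<Theta> (n \<otimes> inv n)"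
    using cont_rep_mult[OF assms(2,3)] by simp
  also have "\<dots> = 1\<^sub>m m"
    using cont_rep_one[OF assms(1,2)] subgroup.mem_carrier[OF assms(1,3)] by simp
  finally show ?thesis .
qed

lemma cont_rep_affords_dim_eq:
  assumes "subgroup N G" "cont_rep G T N m \<Theta>" "affords N \<Theta> \<theta>" "cont_rep G T N m' \<Theta>'"
    "affords N \<Theta>' \<theta>"
  shows "m = m'"
proof -
  have one: "\<one> \<in> N" using subgroup.one_closed[OF assms(1)] .
  have "of_nat m = mat_trace (\<Theta> \<one>)"
    using cont_rep_one[OF assms(1,2)] by (simp add: mat_trace_one)
  also have "\<dots> = mat_trace (\<Theta>' \<one>)"
    using assms(3,5) one unfolding affords_def by simp
  also have "\<dots> = of_nat m'"
    using cont_rep_one[OF assms(1,4)] by (simp add: mat_trace_one)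
  finally show ?thesis by simp
qed

lemma trace_orthogonal_to_rep_eq_0:
  assumes N: "subgroup N G" and \<Theta>: "cont_rep G T N m \<Theta>" "affords N \<Theta> \<theta>"
    and \<Theta>': "cont_rep G T N m' \<Theta>'" "irreducible_rep N m' \<Theta>'" "affords N \<Theta>' \<theta>"
    and P: "P \<in> carrier_mat m m" and orth: "\<And>n. n \<in> N \<Longrightarrow> mat_trace (P * \<Theta> n) = 0"
  shows "P = 0\<^sub>m m m"
proof -
  have "m' = m" using cont_rep_affords_dim_eq[OF N \<Theta>'(1,3) \<Theta>] .
  note \<Theta>' = \<Theta>'[unfolded this]
  define S where "S = (\<lambda>n. (\<Theta> n, \<Theta>' n)) ` N"
  show ?thesis
  proof (rule trace_orthogonal_eq_0[where S = S])
    show "S \<subseteq> carrier_mat m m \<times> carrier_mat m m"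
      using cont_rep_carrier[OF \<Theta>(1)] cont_rep_carrier[OF \<Theta>'(1)] unfolding S_def by blast
  next
    fix X Y X' Y' assume "(X, Y) \<in> S" "(X', Y') \<in> S"
    then obtain a b where "a \<in> N" "b \<in> N" "X = \<Theta> a" "Y = \<Theta>' a" "X' = \<Theta> b" "Y' = \<Theta>' b"
      unfolding S_def by blast
    then have "(X * X', Y * Y') = (\<Theta> (a \<otimes> b), \<Theta>' (a \<otimes> b))"
      using cont_rep_mult[OF \<Theta>(1)] cont_rep_mult[OF \<Theta>'(1)] by simp
    moreover have "a \<otimes> b \<in> N" using subgroup.m_closed[OF N \<open>a \<in> N\<close> \<open>b \<in> N\<close>] .
    ultimately show "(X * X', Y * Y') \<in> S" unfolding S_def by simp
  next
    have "(\<Theta> \<one>, \<Theta>' \<one>) \<in> S"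
      unfolding S_def using subgroup.one_closed[OF N] by (rule imageI)
    then show "(1\<^sub>m m, 1\<^sub>m m) \<in> S"
      using cont_rep_one[OF N \<Theta>(1)] cont_rep_one[OF N \<Theta>'(1)] by simp
  next
    show "mat_trace X = mat_trace Y" if "(X, Y) \<in> S" for X Y
      using that \<Theta>(2) \<Theta>'(3) unfolding S_def affords_def by auto
  next
    have "snd ` S = \<Theta>' ` N" unfolding S_def by (simp add: image_image)
    then show "irreducible_rep (snd ` S) m (\<lambda>Y. Y)"
      using \<Theta>'(2) by (simp add: irreducible_rep_image_iff)
  next
    show "mat_trace (P * X) = 0" if "(X, Y) \<in> S" for X Y
      using that orth unfolding S_def by auto
  qed (rule P)
qed

context
  fixes N K :: "'a set" and T :: "'a topology" and m :: nat and \<Theta> Prj :: "'a \<Rightarrow> complex mat"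
  assumes N: "subgroup N G" and K: "subgroup K G" and NK: "N \<subseteq> K"
    and \<Theta>: "cont_rep G T N m \<Theta>" and Prj: "strong_ext_rep G N K m \<Theta> Prj"
begin

lemma strong_ext_rep_carrier: "x \<in> K \<Longrightarrow> Prj x \<in> carrier_mat m m \<and> invertible_mat (Prj x)"
  using Prj unfolding strong_ext_rep_def proj_rep_def by blast

lemma strong_ext_rep_mult_right: "x \<in> K \<Longrightarrow> n \<in> N \<Longrightarrow> Prj (x \<otimes> n) = Prj x * \<Theta> n"
  and strong_ext_rep_mult_left: "x \<in> K \<Longrightarrow> n \<in> N \<Longrightarrow> Prj (n \<otimes> x) = \<Theta> n * Prj x"
  using Prj unfolding strong_ext_rep_def by blast+

lemma strong_ext_rep_trace_conj:
  assumes z: "z \<in> K" and n: "n \<in> N"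
  shows "mat_trace (Prj (inv n \<otimes> z \<otimes> n)) = mat_trace (Prj z)"
proof -
  have inv_n: "inv n \<in> N" using subgroup.m_inv_closed[OF N n] .
  have "inv n \<otimes> z \<in> K" using subgroup.m_closed[OF K _ z] inv_n NK by blast
  then have "Prj (inv n \<otimes> z \<otimes> n) = \<Theta> (inv n) * Prj z * \<Theta> n"
    using strong_ext_rep_mult_right[OF _ n] strong_ext_rep_mult_left[OF z inv_n] by simp
  moreover have carriers: "\<Theta> (inv n) \<in> carrier_mat m m" "\<Theta> n \<in> carrier_mat m m"
    "Prj z \<in> carrier_mat m m"
    using cont_rep_carrier[OF \<Theta>] strong_ext_rep_carrier inv_n n z by blast+
  ultimately have "mat_trace (Prj (inv n \<otimes> z \<otimes> n)) = mat_trace (\<Theta> (inv n) * (Prj z * \<Theta> n))"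
    by (simp add: assoc_mult_mat[OF carriers(1,3,2)])
  also have "\<dots> = mat_trace (Prj z * \<Theta> n * \<Theta> (inv n))"
    using carriers by (intro mat_trace_mult_comm) auto
  also have "\<dots> = mat_trace (Prj z * (\<Theta> n * \<Theta> (inv n)))"
    by (simp add: assoc_mult_mat[OF carriers(3,2,1)])
  also have "\<dots> = mat_trace (Prj z)"
    using cont_rep_mult_inv[OF N \<Theta> n] carriers(3) by simp
  finally show ?thesis .
qed

lemma strong_ext_rep_nonvanishing:
  assumes "Irr G T N \<theta>" "affords N \<Theta> \<theta>" "x \<in> K"
  shows "\<exists>n\<in>N. mat_trace (Prj (x \<otimes> n)) \<noteq> 0"
proof (rule ccontr)
  assume "\<not> ?thesis"
  then have "mat_trace (Prj (x \<otimes> n)) = 0" if "n \<in> N" for n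
    using that by blast
  then have orth: "mat_trace (Prj x * \<Theta> n) = 0" if "n \<in> N" for n
    using that strong_ext_rep_mult_right[OF assms(3) that] by metis
  obtain m' \<Theta>' where \<Theta>': "cont_rep G T N m' \<Theta>'" "irreducible_rep N m' \<Theta>'" "affords N \<Theta>' \<theta>"
    using assms(1) unfolding Irr_def by blast
  have "Prj x = 0\<^sub>m m m"
    using trace_orthogonal_to_rep_eq_0[OF N \<Theta> assms(2) \<Theta>' _ orth]
      strong_ext_rep_carrier[OF assms(3)] by blast
  moreover have "0 < m"
    using \<Theta>'(2) cont_rep_affords_dim_eq[OF N \<Theta> assms(2) \<Theta>'(1,3)]
    unfolding irreducible_rep_def by simp
  ultimately show False
    using strong_ext_rep_carrier[OF assms(3)] invertible_mat_nonzero by blast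
qed

end

lemma strong_ext_nonvanishing:
  assumes "subgroup N G" "subgroup K G" "N \<subseteq> K" "Irr G T N \<theta>" "strong_ext G T N K \<theta> \<theta>h"
    "x \<in> K"
  shows "\<exists>n\<in>N. \<theta>h (x \<otimes> n) \<noteq> 0"
proof -
  obtain m \<Theta> Prj where \<Theta>: "cont_rep G T N m \<Theta>" "affords N \<Theta> \<theta>"
    and Prj: "strong_ext_rep G N K m \<Theta> Prj" and \<theta>h: "\<forall>x\<in>K. \<theta>h x = mat_trace (Prj x)"
    using assms(5) unfolding strong_ext_def by blast
  obtain n where n: "n \<in> N" "mat_trace (Prj (x \<otimes> n)) \<noteq> 0"
    using strong_ext_rep_nonvanishing[OF assms(1-3) \<Theta>(1) Prj assms(4) \<Theta>(2) assms(6)] by blast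
  have "x \<otimes> n \<in> K" using subgroup.m_closed[OF assms(2) assms(6)] n(1) assms(3) by blast
  then show ?thesis using n \<theta>h by (intro bexI[of _ n]) auto
qed

lemma strong_ext_conj_invariant:
  assumes "subgroup N G" "subgroup K G" "N \<subseteq> K" "strong_ext G T N K \<theta> \<theta>h" "z \<in> K" "n \<in> N"
  shows "\<theta>h (inv n \<otimes> z \<otimes> n) = \<theta>h z"
proof -
  obtain m \<Theta> Prj where \<Theta>: "cont_rep G T N m \<Theta>"
    and Prj: "strong_ext_rep G N K m \<Theta> Prj" and \<theta>h: "\<forall>x\<in>K. \<theta>h x = mat_trace (Prj x)"
    using assms(4) unfolding strong_ext_def by blast
  have "inv n \<in> K" using subgroup.m_inv_closed[OF assms(1,6)] assms(3) by blast
  then have "inv n \<otimes> z \<otimes> n \<in> K"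
    using subgroup.m_closed[OF assms(2)] assms(3,5,6) by blast
  then show ?thesis
    using strong_ext_rep_trace_conj[OF assms(1-3) \<Theta> Prj assms(5,6)] \<theta>h assms(5) by simp
qed

lemma conjf_eq_if_same_coset:
  assumes N: "subgroup N G" and invariant: "\<And>n. n \<in> N \<Longrightarrow> f (inv n \<otimes> z \<otimes> n) = f z"
    and g: "g \<in> carrier G" "g' \<in> carrier G" and coset: "g <# N = g' <# N"
    and z: "z = inv g \<otimes> y \<otimes> g" and y: "y \<in> carrier G"
  shows "conjf G g' f y = conjf G g f y"
proof -
  have "g' \<in> g' <# N"
    using g(2) subgroup.one_closed[OF N] unfolding l_coset_def by force
  then obtain n where n: "n \<in> N" "g' = g \<otimes> n"
    using coset unfolding l_coset_def by auto
  have "inv g' \<otimes> y \<otimes> g' = inv n \<otimes> z \<otimes> n"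
    using g y subgroup.mem_carrier[OF N n(1)] by (simp add: z n(2) inv_mult_group m_assoc)
  then show ?thesis using invariant[OF n(1)] z by (simp add: conjf_def)
qed

lemma strong_ext_twist_factor_unique:
  assumes "subgroup N G" "subgroup K G" "N \<subseteq> K" "Irr G T N \<theta>" "strong_ext G T N K \<theta> \<theta>h"
    and "subgroup L G" "\<forall>g \<in> L. (\<lambda>x. g \<otimes> x \<otimes> inv g) ` K = K"
    and "g \<in> L" "g' \<in> L" "g <# N = g' <# N"
    and "Lin G T \<psi>" "\<forall>x \<in> K. \<psi> x = \<psi>' x"
    and "\<forall>x \<in> K. \<forall>n \<in> N. \<mu> (x \<otimes> n) = \<mu> x" "\<forall>x \<in> K. \<forall>n \<in> N. \<mu>' (x \<otimes> n) = \<mu>' x"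
    and "\<forall>x \<in> K. conjf G g \<theta>h x = \<theta>h x * \<psi> x * \<mu> x"
    and "\<forall>x \<in> K. conjf G g' \<theta>h x = \<theta>h x * \<psi>' x * \<mu>' x"
    and "x \<in> K"
  shows "\<mu> x = \<mu>' x"
proof -
  obtain n where n: "n \<in> N" "\<theta>h (x \<otimes> n) \<noteq> 0"
    using strong_ext_nonvanishing[OF assms(1-5,17)] by blast
  define y where "y = x \<otimes> n"
  have y: "y \<in> K" "y \<in> carrier G"
    using subgroup.m_closed[OF assms(2,17)] n(1) assms(3) subgroup.subset[OF assms(2)]
    unfolding y_def by blast+
  have g: "g \<in> carrier G" "g' \<in> carrier G" "inv g \<in> L"
    using subgroup.mem_carrier[OF assms(6)] subgroup.m_inv_closed[OF assms(6)] assms(8,9) by blast+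
  then have "inv g \<otimes> y \<otimes> inv (inv g) \<in> K" using assms(7) y(1) by blast
  then have "inv g \<otimes> y \<otimes> g \<in> K" using g(1) by simp
  then have coset_eq: "conjf G g' \<theta>h y = conjf G g \<theta>h y"
    by (intro conjf_eq_if_same_coset[OF assms(1) _ g(1,2) assms(10) refl y(2)]
        strong_ext_conj_invariant[OF assms(1-3,5)])
  have "\<theta>h y * \<psi> y * \<mu> y = conjf G g \<theta>h y"
    using assms(15) y(1) by simp
  also have "\<dots> = conjf G g' \<theta>h y"
    using coset_eq by simp
  also have "\<dots> = \<theta>h y * \<psi> y * \<mu>' y"
    using assms(12,16) y(1) by simp
  finally have "\<theta>h y * \<psi> y * \<mu> y = \<theta>h y * \<psi> y * \<mu>' y" .
  moreover have "\<theta>h y * \<psi> y \<noteq> 0"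
    using n(2) Lin_nonzero[OF assms(11) y(2)] unfolding y_def by simp
  ultimately have "\<mu> y = \<mu>' y" by simp
  then show ?thesis using assms(13,14,17) n(1) unfolding y_def by simp
qed

end

theorem lemma2p6:
  fixes G :: "('a, 'b) monoid_scheme" and T :: "'a topology"
    and N K :: "'a set" and \<theta> \<theta>h :: "'a \<Rightarrow> complex"
  assumes "profinite_group G T"
    and "N \<lhd> G" and "openin T N"
    and "Irr G T N \<theta>"
    and "subgroup K G" and "N \<subseteq> K" and "K \<subseteq> Stab G N \<theta>"
    and "strong_ext G T N K \<theta> \<theta>h"
  shows "(\<forall>x \<in> K. \<exists>n \<in> N. \<theta>h (x \<otimes>\<^bsub>G\<^esub> n) \<noteq> 0) \<and>
    (\<forall>L. subgroup L G \<and> N \<subseteq> L \<and> L \<subseteq> Stab_twist G T N \<theta> \<and>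
         (\<forall>g \<in> L. (\<lambda>x. g \<otimes>\<^bsub>G\<^esub> x \<otimes>\<^bsub>G\<^esub> inv\<^bsub>G\<^esub> g) ` K = K) \<longrightarrow>
      (\<forall>g g' \<psi> \<psi>' \<mu> \<mu>'.
         g \<in> L \<and> g' \<in> L \<and> g <#\<^bsub>G\<^esub> N = g' <#\<^bsub>G\<^esub> N \<and>
         Lin G T \<psi> \<and> Lin G T \<psi>' \<and> (\<forall>x \<in> K. \<psi> x = \<psi>' x) \<and>
         (\<forall>n \<in> N. conjf G g \<theta> n = \<theta> n * \<psi> n) \<and>
         (\<forall>n \<in> N. conjf G g' \<theta> n = \<theta> n * \<psi>' n) \<and>
         (\<forall>x \<in> K. \<mu> x \<noteq> 0 \<and> (\<forall>n \<in> N. \<mu> (x \<otimes>\<^bsub>G\<^esub> n) = \<mu> x)) \<and>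
         (\<forall>x \<in> K. \<mu>' x \<noteq> 0 \<and> (\<forall>n \<in> N. \<mu>' (x \<otimes>\<^bsub>G\<^esub> n) = \<mu>' x)) \<and>
         (\<forall>x \<in> K. conjf G g \<theta>h x = \<theta>h x * \<psi> x * \<mu> x) \<and>
         (\<forall>x \<in> K. conjf G g' \<theta>h x = \<theta>h x * \<psi>' x * \<mu>' x)
       \<longrightarrow> (\<forall>x \<in> K. \<mu> x = \<mu>' x)))"
proof -
  interpret group G using assms(1) by (simp add: profinite_group_def)
  have N: "subgroup N G" using assms(2) by (rule normal_imp_subgroup)
  show ?thesis
  proof (intro conjI ballI allI impI, goal_cases)
    case (1 x)
    then show ?case by (rule strong_ext_nonvanishing[OF N assms(5,6,4,8)])
  next
    case (2 L g g' \<psi> \<psi>' \<mu> \<mu>' x)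
    then show ?case
      by - (elim conjE, rule strong_ext_twist_factor_unique[OF N assms(5,6,4,8)], auto)
  qed
qed

end
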